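(* Fix $k\in\{1,\dots,n\}$ and let $A\subseteq P_{\{1,\dots,k\}}M_n(\mathbb{C})$ be a set such that $E_{m,m}\in A$ for every $m\in\{1,\dots,k\}$, and such that for every nonempty subset $J\subseteq\{1,\dots,k\}$ we have $P_J\,A\,(1_n-P_J)\neq\{0\}$. Then for every $t\in\{1,\dots,k\}$ the algebra generated by $A$ contains an element $S$ such that $S(t,l)\neq 0$ for some $l\in\{k+1,\dots,n\}$.
   Context: $E_{i,j}$ denote the matrix units of $M_n(\mathbb{C})$, $1_n$ is the identity matrix, and for $J\subseteq\{1,\dots,n\}$, $P_J=\sum_{i\in J}E_{i,i}$. For a matrix $a$, $a(i,j)$ denotes its $(i,j)$ entry. $P_J A(1_n-P_J)$ denotes the set $\{P_Ja(1_n-P_J): a\in A\}$. *)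

theory Defs
  imports "Jordan_Normal_Form.Matrix"
begin

text \<open>Conventions: matrices are n x n complex matrices (JNF type complex mat,
  carrier_mat n n). The paper's indices 1..n are used throughout; the JNF
  entry (i-1, j-1) is the paper's entry (i, j).\<close>

definition munit :: "nat \<Rightarrow> nat \<Rightarrow> nat \<Rightarrow> complex mat" where
  "munit n i j = mat n n (\<lambda>(r, c). if r + 1 = i \<and> c + 1 = j then 1 else 0)"

definition proj :: "nat \<Rightarrow> nat set \<Rightarrow> complex mat" where
  "proj n J = mat n n (\<lambda>(r, c). if r = c \<and> r + 1 \<in> J then 1 else 0)"

definition entry :: "complex mat \<Rightarrow> nat \<Rightarrow> nat \<Rightarrow> complex" where
  "entry a i j = a $$ (i - 1, j - 1)"

inductive_set gen_alg :: "complex mat set \<Rightarrow> complex mat set" for A where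
  gen: "a \<in> A \<Longrightarrow> a \<in> gen_alg A"
| add: "a \<in> gen_alg A \<Longrightarrow> b \<in> gen_alg A \<Longrightarrow> a + b \<in> gen_alg A"
| mult: "a \<in> gen_alg A \<Longrightarrow> b \<in> gen_alg A \<Longrightarrow> a * b \<in> gen_alg A"
| smult: "a \<in> gen_alg A \<Longrightarrow> c \<cdot>\<^sub>m a \<in> gen_alg A"

end

theory Submission
  imports Defs
begin

(* Call a row t escaping if some element S of the algebra generated
   by A has a nonzero entry S(t,l) with l > k.  Suppose the set R of
   non-escaping rows in {1..k} were nonempty.  The hypothesis for J = R gives
   a \<in> A with P_R a (1 - P_R) \<noteq> 0, i.e. an entry a(r,c) \<noteq> 0 with r \<in> R, c \<notin> R.
   If c > k, then a itself makes row r escape.  If c \<le> k, row c escapes through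
   some S with S(c,l) \<noteq> 0, and the product a E_cc S lies in the algebra and has
   (r,l)-entry a(r,c) S(c,l) \<noteq> 0, so again row r escapes: a contradiction. *)

lemma gen_alg_carrier:
  assumes "A \<subseteq> carrier_mat n n" and "S \<in> gen_alg A"
  shows "S \<in> carrier_mat n n"
  using assms(2) by induction (use assms(1) in auto)

lemma proj_carrier [simp]: "proj n J \<in> carrier_mat n n"
  by (simp add: proj_def)

lemma co_proj_carrier [simp]: "1\<^sub>m n - proj n J \<in> carrier_mat n n"
  by (intro minus_carrier_mat one_carrier_mat proj_carrier)

lemma proj_range_carrier:
  assumes "A \<subseteq> {proj n J * a | a. a \<in> carrier_mat n n}"
  shows "A \<subseteq> carrier_mat n n"
proof
  fix x assume "x \<in> A"
  then obtain b where "x = proj n J * b" "b \<in> carrier_mat n n" using assms by blast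
  then show "x \<in> carrier_mat n n" by (metis mult_carrier_mat proj_carrier)
qed

lemma munit_carrier [simp]: "munit n i j \<in> carrier_mat n n"
  by (simp add: munit_def)

lemma sum_single_term:
  fixes g :: "nat \<Rightarrow> 'a::comm_monoid_add"
  assumes "c < n" and "\<And>i. i < n \<Longrightarrow> i \<noteq> c \<Longrightarrow> g i = 0"
  shows "(\<Sum>i = 0..<n. g i) = g c"
proof -
  have "(\<Sum>i = 0..<n. g i) = (\<Sum>i \<in> {c}. g i)"
    by (rule sum.mono_neutral_right) (use assms in auto)
  then show ?thesis by simp
qed

lemma mult_index_sum:
  assumes "X \<in> carrier_mat n n" "Y \<in> carrier_mat n n" "r < n" "s < n"
  shows "(X * Y) $$ (r, s) = (\<Sum>i = 0..<n. X $$ (r, i) * Y $$ (i, s))"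
  using assms by (auto simp: scalar_prod_def intro!: sum.cong)

lemma proj_mult_index:
  assumes "a \<in> carrier_mat n n" "r < n" "c < n"
  shows "(proj n J * a) $$ (r, c) = (if r + 1 \<in> J then a $$ (r, c) else 0)"
proof -
  have "(proj n J * a) $$ (r, c) = (\<Sum>i = 0..<n. proj n J $$ (r, i) * a $$ (i, c))"
    by (rule mult_index_sum) (use assms in auto)
  also have "\<dots> = proj n J $$ (r, r) * a $$ (r, c)"
    using assms(2) by (intro sum_single_term) (auto simp: proj_def)
  finally show ?thesis using assms(2) by (simp add: proj_def)
qed

lemma mult_co_proj_index:
  assumes "a \<in> carrier_mat n n" "r < n" "c < n"
  shows "(a * (1\<^sub>m n - proj n J)) $$ (r, c) = (if c + 1 \<in> J then 0 else a $$ (r, c))"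
proof -
  have "(a * (1\<^sub>m n - proj n J)) $$ (r, c)
        = (\<Sum>i = 0..<n. a $$ (r, i) * (1\<^sub>m n - proj n J) $$ (i, c))"
    by (rule mult_index_sum) (use assms in auto)
  also have "\<dots> = a $$ (r, c) * (1\<^sub>m n - proj n J) $$ (c, c)"
    using assms(3) by (intro sum_single_term) (auto simp: proj_def)
  finally show ?thesis using assms(3) by (simp add: proj_def)
qed

lemma corner_index:
  assumes "a \<in> carrier_mat n n" "r < n" "c < n"
  shows "(proj n J * a * (1\<^sub>m n - proj n J)) $$ (r, c)
         = (if r + 1 \<in> J \<and> c + 1 \<notin> J then a $$ (r, c) else 0)"
  using mult_co_proj_index[OF mult_carrier_mat[OF proj_carrier assms(1)] assms(2,3)]
        proj_mult_index[OF assms] by simp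

lemma corner_nonzero_entry:
  assumes "a \<in> carrier_mat n n" "proj n J * a * (1\<^sub>m n - proj n J) \<noteq> 0\<^sub>m n n"
  shows "\<exists>r<n. \<exists>c<n. r + 1 \<in> J \<and> c + 1 \<notin> J \<and> a $$ (r, c) \<noteq> 0"
proof (rule ccontr)
  assume "\<not> ?thesis"
  moreover have "proj n J * a * (1\<^sub>m n - proj n J) \<in> carrier_mat n n"
    using assms(1) by (intro mult_carrier_mat) auto
  ultimately have "proj n J * a * (1\<^sub>m n - proj n J) = 0\<^sub>m n n"
    using assms(1) by (intro eq_matI) (auto simp: corner_index)
  with assms(2) show False by contradiction
qed

lemma corner_witness:
  assumes "A \<subseteq> carrier_mat n n" "A \<noteq> {}"
    and "{proj n J * a * (1\<^sub>m n - proj n J) | a. a \<in> A} \<noteq> {0\<^sub>m n n}"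
  shows "\<exists>a \<in> A. \<exists>r<n. \<exists>c<n. r + 1 \<in> J \<and> c + 1 \<notin> J \<and> a $$ (r, c) \<noteq> 0"
proof -
  obtain b where "b \<in> A" using assms(2) by blast
  have "\<exists>a \<in> A. proj n J * a * (1\<^sub>m n - proj n J) \<noteq> 0\<^sub>m n n"
  proof (rule ccontr)
    assume "\<not> ?thesis"
    then have "{proj n J * a * (1\<^sub>m n - proj n J) | a. a \<in> A} = {0\<^sub>m n n}"
      using \<open>b \<in> A\<close> by (auto intro!: exI[of _ b])
    with assms(3) show False by contradiction
  qed
  then show ?thesis using assms(1) corner_nonzero_entry by blast
qed

lemma munit_sandwich_index:
  assumes "a \<in> carrier_mat n n" "b \<in> carrier_mat n n" "r < n" "s < n" "c < n"
  shows "(a * munit n (c + 1) (c + 1) * b) $$ (r, s) = a $$ (r, c) * b $$ (c, s)"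
proof -
  have aE: "(a * munit n (Suc c) (Suc c)) $$ (r, i) = (if i = c then a $$ (r, c) else 0)"
    if "i < n" for i
  proof -
    have "(a * munit n (c + 1) (c + 1)) $$ (r, i)
          = (\<Sum>j = 0..<n. a $$ (r, j) * munit n (c + 1) (c + 1) $$ (j, i))"
      by (rule mult_index_sum) (use assms that in auto)
    also have "\<dots> = a $$ (r, c) * munit n (c + 1) (c + 1) $$ (c, i)"
      using assms(5) that by (intro sum_single_term) (auto simp: munit_def)
    finally show ?thesis using assms(5) that by (simp add: munit_def)
  qed
  have "(a * munit n (c + 1) (c + 1) * b) $$ (r, s)
        = (\<Sum>i = 0..<n. (a * munit n (c + 1) (c + 1)) $$ (r, i) * b $$ (i, s))"
    by (rule mult_index_sum) (use assms in auto)
  also have "\<dots> = (a * munit n (c + 1) (c + 1)) $$ (r, c) * b $$ (c, s)"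
    using assms(5) by (intro sum_single_term) (auto simp: aE)
  finally show ?thesis using assms(5) by (simp add: aE)
qed

definition row_escapes :: "nat \<Rightarrow> nat \<Rightarrow> complex mat set \<Rightarrow> nat \<Rightarrow> bool" where
  "row_escapes n k A t \<longleftrightarrow> (\<exists>S \<in> gen_alg A. \<exists>l \<in> {k+1..n}. entry S t l \<noteq> 0)"

lemma row_escapes_direct:
  assumes "a \<in> A" "c < n" "k \<le> c" "a $$ (r, c) \<noteq> 0"
  shows "row_escapes n k A (r + 1)"
  unfolding row_escapes_def
proof (intro bexI)
  show "entry a (r + 1) (c + 1) \<noteq> 0" using assms(4) by (simp add: entry_def)
qed (use assms in \<open>auto intro: gen_alg.gen\<close>)

lemma row_escapes_propagate:
  assumes "A \<subseteq> carrier_mat n n" "a \<in> A" "r < n" "c < n" "a $$ (r, c) \<noteq> 0"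
    and "munit n (c + 1) (c + 1) \<in> A" "row_escapes n k A (c + 1)"
  shows "row_escapes n k A (r + 1)"
proof -
  obtain S l where S: "S \<in> gen_alg A" "l \<in> {k+1..n}" "entry S (c + 1) l \<noteq> 0"
    using assms(7) unfolding row_escapes_def by blast
  define T where "T = a * munit n (c + 1) (c + 1) * S"
  have "T \<in> gen_alg A"
    unfolding T_def using assms(2,6) S(1) by (blast intro: gen_alg.mult gen_alg.gen)
  moreover have "entry T (r + 1) l = a $$ (r, c) * S $$ (c, l - 1)"
    unfolding T_def entry_def using assms(1-4) S(2)
    by (simp only: add_diff_cancel_right', intro munit_sandwich_index
        gen_alg_carrier[OF assms(1) S(1)]) auto
  then have "entry T (r + 1) l \<noteq> 0" using assms(5) S(3) by (simp add: entry_def)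
  ultimately show ?thesis using S(2) unfolding row_escapes_def by blast
qed

theorem lemma5:
  fixes n k :: nat and A :: "complex mat set"
  assumes "k \<in> {1..n}"
    and "A \<subseteq> {proj n {1..k} * a | a. a \<in> carrier_mat n n}"
    and "\<forall>m \<in> {1..k}. munit n m m \<in> A"
    and "\<forall>J. J \<subseteq> {1..k} \<and> J \<noteq> {} \<longrightarrow>
           {proj n J * a * (1\<^sub>m n - proj n J) | a. a \<in> A} \<noteq> {0\<^sub>m n n}"
  shows "\<forall>t \<in> {1..k}. \<exists>S \<in> gen_alg A. \<exists>l \<in> {k+1..n}. entry S t l \<noteq> 0"
proof (rule ccontr)
  define R where "R = {t \<in> {1..k}. \<not> row_escapes n k A t}"
  assume "\<not> ?thesis"
  then have "R \<noteq> {}" "R \<subseteq> {1..k}" unfolding R_def row_escapes_def by auto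
  have A_carrier: "A \<subseteq> carrier_mat n n" using assms(2) by (rule proj_range_carrier)
  have "munit n 1 1 \<in> A" using assms(1,3) by auto
  then obtain a r c where a: "a \<in> A" "r < n" "c < n" and
      rc: "r + 1 \<in> R" "c + 1 \<notin> R" "a $$ (r, c) \<noteq> 0"
    using corner_witness[OF A_carrier, of R] assms(4) \<open>R \<noteq> {}\<close> \<open>R \<subseteq> {1..k}\<close> by blast
  have "row_escapes n k A (r + 1)"
  proof (cases "k \<le> c")
    case True
    show ?thesis using row_escapes_direct[OF a(1,3) True rc(3)] .
  next
    case False
    then have "munit n (c + 1) (c + 1) \<in> A" "row_escapes n k A (c + 1)"
      using assms(3) rc(2) unfolding R_def by auto
    then show ?thesis using row_escapes_propagate[OF A_carrier a rc(3)] by blast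
  qed
  with rc(1) show False unfolding R_def by blast
qed

end
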